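(* A set system $H=(U,(A_1,\dots,A_m))$ is harmonic if and only if its complement $\overline H=(U,(U\setminus A_1,\dots,U\setminus A_m))$ is harmonic.
   Context: For $I\subseteq[m]$, $H_I=\bigcap_{i\in I}A_i$ ($=U$ if $I=\emptyset$). The run decomposition of a finite set $I$ of positive integers is the partition formed by the sizes, in nonincreasing order, of the maximal runs of consecutive integers in $I$. $H$ is harmonic if $|H_I|=|H_J|$ whenever $I,J\subseteq[m]$ have the same run decomposition. *)

theory Defs
  imports Main "HOL-Library.Multiset"
begin

text \<open>A set system H = (U, (A_1,...,A_m)) is given by a ground set U, a length m and
  a family A :: nat => 'a set, of which only A 1, ..., A m matter.\<close>

definition runs :: "nat set \<Rightarrow> nat set set" where
  "runs I = {{a..b} | a b. 1 \<le> a \<and> a \<le> b \<and> {a..b} \<subseteq> I \<and> a - 1 \<notin> I \<and> b + 1 \<notin> I}"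

definition run_decomp :: "nat set \<Rightarrow> nat multiset" where
  "run_decomp I = image_mset card (mset_set (runs I))"

definition H_int :: "'a set \<Rightarrow> (nat \<Rightarrow> 'a set) \<Rightarrow> nat set \<Rightarrow> 'a set" where
  "H_int U A I = (if I = {} then U else (\<Inter>i\<in>I. A i))"

definition harmonic :: "'a set \<Rightarrow> nat \<Rightarrow> (nat \<Rightarrow> 'a set) \<Rightarrow> bool" where
  "harmonic U m A \<longleftrightarrow>
     (\<forall>I J. I \<subseteq> {1..m} \<longrightarrow> J \<subseteq> {1..m} \<longrightarrow> run_decomp I = run_decomp J \<longrightarrow>
        card (H_int U A I) = card (H_int U A J))"

definition complement_system :: "'a set \<Rightarrow> (nat \<Rightarrow> 'a set) \<Rightarrow> nat \<Rightarrow> 'a set" where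
  "complement_system U A = (\<lambda>i. U - A i)"

end

theory Submission
  imports Defs "HOL-Library.Disjoint_Sets"
begin

text \<open>
  By inclusion-exclusion inside U, the complementary system satisfies
  |U - (\<Union>i\<in>I. A i)| = \<Sum>K\<subseteq>I. (-1)^|K| |H_K|.
  If I and J have the same run decomposition, translating each run of I onto a run
  of J of the same length gives a bijection I \<rightarrow> J that sends consecutive integers
  exactly to consecutive integers. It therefore carries each K \<subseteq> I to a subset of J
  with the same run decomposition and the same size, so for harmonic H the two
  alternating sums agree term by term. The converse holds because complementing
  twice restores A on {1..m}.
\<close>

lemma image_mset_mset_set_eq_imp_bij_betw:
  assumes "finite X" "finite Y" "image_mset h (mset_set X) = image_mset h (mset_set Y)"
  obtains g where "bij_betw g X Y" "\<forall>x\<in>X. h (g x) = h x"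
  using assms
proof (induction X arbitrary: Y thesis rule: finite_induct)
  case empty
  then show ?case
    by (force simp: mset_set_empty_iff bij_betw_def)
next
  case (insert x X)
  have "image_mset h (mset_set Y) = add_mset (h x) (image_mset h (mset_set X))"
    using insert.prems(3) insert.hyps by simp
  then have "h x \<in># image_mset h (mset_set Y)"
    by simp
  then obtain y where y: "y \<in> Y" "h y = h x"
    using insert.prems(2) by auto
  have "mset_set Y = add_mset y (mset_set (Y - {y}))"
    using mset_set.remove[OF insert.prems(2) y(1)] .
  then have "image_mset h (mset_set X) = image_mset h (mset_set (Y - {y}))"
    using insert.prems(3) insert.hyps y(2) by simp
  then obtain g where g: "bij_betw g X (Y - {y})" "\<forall>x\<in>X. h (g x) = h x"
    using insert.IH insert.prems(2) by blast
  have "bij_betw (g(x := y)) X (Y - {y})"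
    using g(1) insert.hyps(2) by (subst bij_betw_cong[of _ _ g]) auto
  then have "bij_betw (g(x := y)) (X \<union> {x}) (Y - {y} \<union> {y})"
    using notIn_Un_bij_betw3[of x X "g(x := y)" "Y - {y}"] insert.hyps(2) by simp
  moreover have "Y - {y} \<union> {y} = Y"
    using y(1) by blast
  ultimately have "bij_betw (g(x := y)) (insert x X) Y"
    by simp
  moreover have "\<forall>z\<in>insert x X. h ((g(x := y)) z) = h z"
    using g(2) y(2) by auto
  ultimately show ?case
    using insert.prems(1) by blast
qed

lemma bij_betw_shift_interval:
  "a \<le> b \<Longrightarrow> bij_betw (\<lambda>x. c + (x - a)) {a..b} {c..c + (b - a)}"
  for a b c :: nat
  by (intro bij_betw_byWitness[where f' = "\<lambda>z. z - c + a"]) auto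

section \<open>Runs\<close>

lemma runs_subset: "R \<in> runs I \<Longrightarrow> R \<subseteq> I"
  by (auto simp: runs_def)

lemma runsI:
  "1 \<le> a \<Longrightarrow> a \<le> b \<Longrightarrow> {a..b} \<subseteq> I \<Longrightarrow> a - 1 \<notin> I \<Longrightarrow> b + 1 \<notin> I \<Longrightarrow> {a..b} \<in> runs I"
  unfolding runs_def by blast

lemma finite_runs: "finite I \<Longrightarrow> finite (runs I)"
  by (rule finite_subset[of _ "Pow I"]) (auto simp: runs_def)

lemma runs_eqI:
  assumes "R \<in> runs I" "R' \<in> runs I" "x \<in> R" "x \<in> R'"
  shows "R = R'"
proof -
  obtain a b where R: "R = {a..b}" "{a..b} \<subseteq> I" "a - 1 \<notin> I" "b + 1 \<notin> I"
    using assms(1) by (auto simp: runs_def)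
  obtain a' b' where R': "R' = {a'..b'}" "{a'..b'} \<subseteq> I" "a' - 1 \<notin> I" "b' + 1 \<notin> I"
    using assms(2) by (auto simp: runs_def)
  have "a' - 1 \<notin> {a..b}" "a - 1 \<notin> {a'..b'}" "b + 1 \<notin> {a'..b'}" "b' + 1 \<notin> {a..b}"
    using R R' by blast+
  then have "a = a'" "b = b'"
    using assms(3,4) R(1) R'(1) by auto
  then show ?thesis
    using R(1) R'(1) by simp
qed

lemma disjoint_runs: "R \<in> runs I \<Longrightarrow> R' \<in> runs I \<Longrightarrow> R \<noteq> R' \<Longrightarrow> R \<inter> R' = {}"
  using runs_eqI by blast

lemma Suc_in_run:
  assumes "R \<in> runs I" "x \<in> R" "Suc x \<in> I"
  shows "Suc x \<in> R"
proof -
  obtain a b where "R = {a..b}" "b + 1 \<notin> I"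
    using assms(1) by (auto simp: runs_def)
  with assms(2,3) show ?thesis
    by (cases "x = b") auto
qed

lemma ex_run_start:
  fixes I :: "nat set"
  assumes "0 \<notin> I" "x \<in> I"
  shows "\<exists>a. 1 \<le> a \<and> a \<le> x \<and> {a..x} \<subseteq> I \<and> a - 1 \<notin> I"
  using assms(2)
proof (induction x)
  case 0
  with assms(1) show ?case
    by simp
next
  case (Suc n)
  show ?case
  proof (cases "n \<in> I")
    case True
    then obtain a where "1 \<le> a" "a \<le> n" "{a..n} \<subseteq> I" "a - 1 \<notin> I"
      using Suc.IH by blast
    moreover have "{a..Suc n} = insert (Suc n) {a..n}"
      using \<open>a \<le> n\<close> by auto
    ultimately show ?thesis
      using Suc.prems by (intro exI[of _ a]) simp
  next
    case False
    with Suc.prems show ?thesis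
      by (intro exI[of _ "Suc n"]) simp
  qed
qed

lemma ex_run_end:
  fixes I :: "nat set"
  assumes "finite I" "x \<in> I"
  shows "\<exists>b. x \<le> b \<and> {x..b} \<subseteq> I \<and> b + 1 \<notin> I"
proof -
  have bound: "x \<le> Suc (Max I)"
    using Max_ge[OF assms] by simp
  have outside: "Suc (Max I) \<notin> I"
    using Max_ge[OF assms(1), of "Suc (Max I)"] by auto
  have "n \<in> I \<longrightarrow> (\<exists>b. n \<le> b \<and> {n..b} \<subseteq> I \<and> b + 1 \<notin> I)" if "n \<le> Suc (Max I)" for n
    using that
  proof (induction rule: inc_induct)
    case base
    from outside show ?case
      by blast
  next
    case (step n)
    show ?case
    proof (cases "Suc n \<in> I")
      case True
      then obtain b where b: "Suc n \<le> b" "{Suc n..b} \<subseteq> I" "b + 1 \<notin> I"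
        using step.IH by blast
      moreover have "{n..b} = insert n {Suc n..b}"
        using b(1) by auto
      ultimately show ?thesis
        by (intro impI exI[of _ b]) simp
    next
      case False
      then show ?thesis
        by (intro impI exI[of _ n]) simp
    qed
  qed
  with bound assms(2) show ?thesis
    by blast
qed

lemma ex_run_containing:
  assumes "finite I" "0 \<notin> I" "x \<in> I"
  shows "\<exists>R\<in>runs I. x \<in> R"
proof -
  obtain a b where "1 \<le> a" "a \<le> x" "{a..x} \<subseteq> I" "a - 1 \<notin> I" "x \<le> b" "{x..b} \<subseteq> I" "b + 1 \<notin> I"
    using ex_run_start[OF assms(2,3)] ex_run_end[OF assms(1,3)] by blast
  moreover have "{a..b} = {a..x} \<union> {x..b}"
    using \<open>a \<le> x\<close> \<open>x \<le> b\<close> by auto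
  ultimately show ?thesis
    by (intro bexI[of _ "{a..b}"] runsI) auto
qed

lemma Union_runs:
  assumes "finite I" "0 \<notin> I"
  shows "\<Union>(runs I) = I"
  using ex_run_containing[OF assms] runs_subset by blast

definition run_of :: "nat set \<Rightarrow> nat \<Rightarrow> nat set" where
  "run_of I x = (THE R. R \<in> runs I \<and> x \<in> R)"

lemma run_of_eqI: "R \<in> runs I \<Longrightarrow> x \<in> R \<Longrightarrow> run_of I x = R"
  unfolding run_of_def by (rule the_equality) (simp, metis runs_eqI)

lemma run_of_in_runs:
  assumes "finite I" "0 \<notin> I" "x \<in> I"
  shows "run_of I x \<in> runs I" and "x \<in> run_of I x"
  using ex_run_containing[OF assms] run_of_eqI by auto

section \<open>Maps preserving adjacency\<close>

definition adjacency_preserving :: "(nat \<Rightarrow> nat) \<Rightarrow> nat set \<Rightarrow> bool" where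
  "adjacency_preserving f K \<longleftrightarrow> (\<forall>x\<in>K. \<forall>y\<in>K. y = Suc x \<longleftrightarrow> f y = Suc (f x))"

lemma adjacency_preservingD:
  "adjacency_preserving f K \<Longrightarrow> x \<in> K \<Longrightarrow> y \<in> K \<Longrightarrow> y = Suc x \<longleftrightarrow> f y = Suc (f x)"
  unfolding adjacency_preserving_def by blast

lemma adjacency_preserving_subset:
  "adjacency_preserving f K \<Longrightarrow> L \<subseteq> K \<Longrightarrow> adjacency_preserving f L"
  unfolding adjacency_preserving_def by blast

lemma adjacency_preserving_add:
  assumes "adjacency_preserving f K" "{a..a + n} \<subseteq> K"
  shows "f (a + n) = f a + n"
  using assms(2)
proof (induction n)
  case 0
  show ?case
    by simp
next
  case (Suc n)
  then have "{a..a + n} \<subseteq> K" "a + n \<in> K" "Suc (a + n) \<in> K"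
    by auto
  then have "f (Suc (a + n)) = Suc (f (a + n))"
    using adjacency_preservingD[OF assms(1)] by blast
  with Suc.IH \<open>{a..a + n} \<subseteq> K\<close> show ?case
    by simp
qed

lemma adjacency_preserving_image_interval:
  assumes "adjacency_preserving f K" "{a..b} \<subseteq> K" "a \<le> b"
  shows "f ` {a..b} = {f a..f b}"
proof -
  have shift: "f k = f a + (k - a)" if "k \<in> {a..b}" for k
  proof -
    have "{a..a + (k - a)} \<subseteq> K"
      using that assms(2) by auto
    then show ?thesis
      using adjacency_preserving_add[OF assms(1)] that by fastforce
  qed
  have "f ` {a..b} = (\<lambda>k. f a + (k - a)) ` {a..b}"
    using shift by (rule image_cong[OF refl])
  also have "\<dots> = {f a..f a + (b - a)}"
    using bij_betw_shift_interval[OF assms(3)] by (rule bij_betw_imp_surj_on)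
  also have "f a + (b - a) = f b"
    using shift[of b] assms(3) by simp
  finally show ?thesis .
qed

lemma image_run_in_runs:
  assumes "adjacency_preserving f K" "0 \<notin> f ` K" "R \<in> runs K"
  shows "f ` R \<in> runs (f ` K)"
proof -
  obtain a b where R: "R = {a..b}" "a \<le> b" "{a..b} \<subseteq> K" "a - 1 \<notin> K" "b + 1 \<notin> K"
    using assms(3) by (auto simp: runs_def)
  then have "a \<in> K" "b \<in> K"
    by auto
  have image: "f ` R = {f a..f b}"
    using adjacency_preserving_image_interval[OF assms(1) R(3,2)] R(1) by simp
  have "f a \<noteq> 0"
    using assms(2) \<open>a \<in> K\<close> by (metis image_eqI)
  have "f a - 1 \<notin> f ` K"
  proof
    assume "f a - 1 \<in> f ` K"
    then obtain y where "y \<in> K" "f y = f a - 1"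
      by auto
    then have "f a = Suc (f y)"
      using \<open>f a \<noteq> 0\<close> by simp
    then have "a = Suc y"
      using adjacency_preservingD[OF assms(1) \<open>y \<in> K\<close> \<open>a \<in> K\<close>] by blast
    with \<open>y \<in> K\<close> R(4) show False
      by simp
  qed
  moreover have "f b + 1 \<notin> f ` K"
  proof
    assume "f b + 1 \<in> f ` K"
    then obtain y where "y \<in> K" "f y = Suc (f b)"
      by auto
    then have "y = Suc b"
      using adjacency_preservingD[OF assms(1) \<open>b \<in> K\<close> \<open>y \<in> K\<close>] by blast
    with \<open>y \<in> K\<close> R(5) show False
      by simp
  qed
  moreover have "f a \<le> f b" "{f a..f b} \<subseteq> f ` K"
    using image R by auto
  ultimately show ?thesis
    using image \<open>f a \<noteq> 0\<close> by (simp add: runsI)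
qed

lemma runs_image:
  assumes "finite K" "0 \<notin> K" "0 \<notin> f ` K" "adjacency_preserving f K"
  shows "runs (f ` K) = (`) f ` runs K"
proof
  show "(`) f ` runs K \<subseteq> runs (f ` K)"
    using image_run_in_runs[OF assms(4,3)] by blast
  show "runs (f ` K) \<subseteq> (`) f ` runs K"
  proof
    fix S
    assume S: "S \<in> runs (f ` K)"
    then obtain c d where "S = {c..d}" "c \<le> d"
      by (auto simp: runs_def)
    then have "c \<in> S"
      by simp
    then obtain x where "x \<in> K" "c = f x"
      using runs_subset[OF S] by auto
    then obtain R where R: "R \<in> runs K" "x \<in> R"
      using ex_run_containing assms(1,2) by blast
    then have "f ` R = S"
      using runs_eqI[OF image_run_in_runs[OF assms(4,3) R(1)] S] \<open>c \<in> S\<close> \<open>c = f x\<close> by blast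
    with R(1) show "S \<in> (`) f ` runs K"
      by blast
  qed
qed

lemma run_decomp_image:
  assumes "finite K" "0 \<notin> K" "0 \<notin> f ` K" "inj_on f K" "adjacency_preserving f K"
  shows "run_decomp (f ` K) = run_decomp K"
proof -
  have inj: "inj_on ((`) f) (runs K)"
    using inj_on_image_Pow[OF assms(4)] runs_subset by (blast intro: inj_on_subset)
  have "run_decomp (f ` K) = image_mset (\<lambda>R. card (f ` R)) (mset_set (runs K))"
    unfolding run_decomp_def runs_image[OF assms(1-3,5)] image_mset_mset_set[OF inj, symmetric]
    by (simp add: multiset.map_comp o_def)
  also have "\<dots> = run_decomp K"
    unfolding run_decomp_def
  proof (rule image_mset_cong)
    fix R
    assume "R \<in># mset_set (runs K)"
    then have "R \<subseteq> K"
      using finite_runs[OF assms(1)] runs_subset by auto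
    then show "card (f ` R) = card R"
      using assms(4) by (meson card_image inj_on_subset)
  qed
  finally show ?thesis .
qed

section \<open>Sets with equal run decompositions\<close>

definition shift_runs :: "nat set \<Rightarrow> (nat set \<Rightarrow> nat set) \<Rightarrow> nat \<Rightarrow> nat" where
  "shift_runs I g x = Inf (g (run_of I x)) + (x - Inf (run_of I x))"

lemma shift_runs_eq: "R \<in> runs I \<Longrightarrow> x \<in> R \<Longrightarrow> shift_runs I g x = Inf (g R) + (x - Inf R)"
  by (simp add: shift_runs_def run_of_eqI)

lemma Suc_shift_runs_iff:
  assumes "R \<in> runs I" "x \<in> R" "y \<in> R"
  shows "shift_runs I g y = Suc (shift_runs I g x) \<longleftrightarrow> y = Suc x"
proof -
  obtain a b where "R = {a..b}" "a \<le> b"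
    using assms(1) by (auto simp: runs_def)
  with assms show ?thesis
    by (auto simp: shift_runs_eq)
qed

lemma bij_betw_shift_runs_run:
  assumes "R \<in> runs I" "g R \<in> runs J" "card (g R) = card R"
  shows "bij_betw (shift_runs I g) R (g R)"
proof -
  obtain a b where ab: "R = {a..b}" "a \<le> b"
    using assms(1) by (auto simp: runs_def)
  obtain c d where cd: "g R = {c..d}" "c \<le> d"
    using assms(2) by (auto simp: runs_def)
  have "d = c + (b - a)"
    using assms(3) ab cd by simp
  then have "bij_betw (\<lambda>x. c + (x - a)) R (g R)"
    using bij_betw_shift_interval[OF ab(2), of c] ab(1) cd(1) by simp
  moreover have "shift_runs I g x = c + (x - a)" if "x \<in> R" for x
    using shift_runs_eq[OF assms(1) that] ab cd by simp
  ultimately show ?thesis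
    using bij_betw_cong[of R "shift_runs I g" "\<lambda>x. c + (x - a)"] by blast
qed

context
  fixes I J :: "nat set" and g :: "nat set \<Rightarrow> nat set"
  assumes fin: "finite I" "finite J"
    and positive: "0 \<notin> I" "0 \<notin> J"
    and bij_runs: "bij_betw g (runs I) (runs J)"
    and card_runs: "\<forall>R\<in>runs I. card (g R) = card R"
begin

lemma bij_betw_shift_runs_on_run: "R \<in> runs I \<Longrightarrow> bij_betw (shift_runs I g) R (g R)"
  using bij_betw_shift_runs_run bij_betw_apply[OF bij_runs] card_runs by blast

lemma bij_betw_shift_runs: "bij_betw (shift_runs I g) I J"
proof -
  have "disjoint_family_on g (runs I)"
    unfolding disjoint_family_on_def
  proof (intro ballI impI)
    fix R R'
    assume "R \<in> runs I" "R' \<in> runs I" "R \<noteq> R'"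
    then show "g R \<inter> g R' = {}"
      using bij_runs disjoint_runs[of "g R" J "g R'"] by (auto simp: bij_betw_def inj_on_def)
  qed
  then have "bij_betw (shift_runs I g) (\<Union>(runs I)) (\<Union>(g ` runs I))"
    using bij_betw_UNION_disjoint[of g "runs I" "shift_runs I g" id] bij_betw_shift_runs_on_run by simp
  then show ?thesis
    using bij_runs Union_runs fin positive by (simp add: bij_betw_def)
qed

lemma adjacency_preserving_shift_runs: "adjacency_preserving (shift_runs I g) I"
proof -
  let ?f = "shift_runs I g"
  have run: "run_of I x \<in> runs I" "x \<in> run_of I x" if "x \<in> I" for x
    using run_of_in_runs fin(1) positive(1) that by auto
  have "y \<in> run_of I x" if "x \<in> I" "y \<in> I" "y = Suc x \<or> ?f y = Suc (?f x)" for x y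
    using that(3)
  proof
    assume "y = Suc x"
    then show ?thesis
      using Suc_in_run[OF run[OF \<open>x \<in> I\<close>]] \<open>y \<in> I\<close> by simp
  next
    assume "?f y = Suc (?f x)"
    let ?R = "run_of I x"
    have "bij_betw ?f ?R (g ?R)" "g ?R \<in> runs J"
      using bij_betw_shift_runs_on_run bij_betw_apply[OF bij_runs] run(1) \<open>x \<in> I\<close> by auto
    moreover have "?f y \<in> J"
      using bij_betw_shift_runs \<open>y \<in> I\<close> by (auto simp: bij_betw_def)
    ultimately have "?f y \<in> ?f ` ?R"
      using Suc_in_run[of "g ?R" J "?f x"] \<open>?f y = Suc (?f x)\<close> run(2)[OF \<open>x \<in> I\<close>]
      by (auto simp: bij_betw_def)
    then show ?thesis
      using bij_betw_shift_runs runs_subset[OF run(1)] that(1,2) by (auto simp: bij_betw_def inj_on_def)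
  qed
  then show ?thesis
    unfolding adjacency_preserving_def using Suc_shift_runs_iff[OF run(1) run(2)] by blast
qed

end

lemma run_decomp_eq_imp_adjacency_preserving_bij:
  assumes "finite I" "finite J" "0 \<notin> I" "0 \<notin> J" "run_decomp I = run_decomp J"
  obtains f where "bij_betw f I J" "adjacency_preserving f I"
proof -
  obtain g where g: "bij_betw g (runs I) (runs J)" "\<forall>R\<in>runs I. card (g R) = card R"
    using image_mset_mset_set_eq_imp_bij_betw[OF finite_runs finite_runs] assms(1,2,5)
    unfolding run_decomp_def by blast
  show ?thesis
    using that bij_betw_shift_runs[OF assms(1-4) g] adjacency_preserving_shift_runs[OF assms(1-4) g] .
qed

lemma run_decomp_eq_imp_bij_betw_Pow:
  assumes "finite I" "finite J" "0 \<notin> I" "0 \<notin> J" "run_decomp I = run_decomp J"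
  obtains h where "bij_betw h (Pow I) (Pow J)"
    "\<And>K. K \<subseteq> I \<Longrightarrow> run_decomp (h K) = run_decomp K \<and> card (h K) = card K"
proof -
  obtain f where f: "bij_betw f I J" "adjacency_preserving f I"
    using run_decomp_eq_imp_adjacency_preserving_bij[OF assms] .
  have "run_decomp (f ` K) = run_decomp K \<and> card (f ` K) = card K" if "K \<subseteq> I" for K
  proof -
    have "inj_on f K" "f ` K \<subseteq> J"
      using f(1) that by (auto simp: bij_betw_def intro: inj_on_subset)
    moreover have "finite K" "0 \<notin> K"
      using assms(1,3) that finite_subset by auto
    ultimately show ?thesis
      using run_decomp_image adjacency_preserving_subset[OF f(2) that] assms(4) card_image
      by (metis subsetD)
  qed
  with bij_betw_image_Pow[OF f(1)] show ?thesis
    using that by blast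
qed

section \<open>Complementation\<close>

lemma H_int_complement_system: "H_int U (complement_system U A) I = U - (\<Union>i\<in>I. A i)"
  by (auto simp: H_int_def complement_system_def)

lemma H_int_eq_Int: "\<forall>i\<in>K. A i \<subseteq> U \<Longrightarrow> H_int U A K = U \<inter> (\<Inter>i\<in>K. A i)"
  by (auto simp: H_int_def)

lemma card_H_int_complement_system:
  assumes "finite U" "finite I" "\<forall>i\<in>I. A i \<subseteq> U"
  shows "int (card (H_int U (complement_system U A) I))
    = (\<Sum>K\<in>Pow I. (-1) ^ card K * int (card (H_int U A K)))"
proof -
  \<comment> \<open>Counting inside U makes the measure additive on all disjoint sets, as Incl_Excl_UN requires.\<close>
  define \<mu> where "\<mu> X = int (card (U \<inter> X))" for X
  have additive: "\<mu> (S \<union> T) = \<mu> S + \<mu> T" if "disjnt S T" for S T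
  proof -
    have "U \<inter> (S \<union> T) = (U \<inter> S) \<union> (U \<inter> T)" "(U \<inter> S) \<inter> (U \<inter> T) = {}"
      using that by (auto simp: disjnt_def)
    then show ?thesis
      using assms(1) card_Un_disjoint[of "U \<inter> S" "U \<inter> T"] by (simp add: \<mu>_def)
  qed
  define N where "N = {K. K \<subseteq> I \<and> K \<noteq> {}}"
  have "finite N" "{} \<notin> N" "Pow I = insert {} N"
    using assms(2) by (auto simp: N_def)
  then have "(\<Sum>K\<in>Pow I. (-1) ^ card K * int (card (H_int U A K)))
      = int (card U) + (\<Sum>K\<in>N. (-1) ^ card K * int (card (H_int U A K)))"
    by (simp add: H_int_def)
  also have "(\<Sum>K\<in>N. (-1) ^ card K * int (card (H_int U A K))) = - (\<Sum>K\<in>N. (-1) ^ (card K + 1) * \<mu> (\<Inter>i\<in>K. A i))"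
    unfolding sum_negf[symmetric]
  proof (rule sum.cong[OF refl])
    fix K
    assume "K \<in> N"
    then have "H_int U A K = U \<inter> (\<Inter>i\<in>K. A i)"
      using assms(3) H_int_eq_Int[of K A U] by (auto simp: N_def)
    then show "(-1) ^ card K * int (card (H_int U A K)) = - ((-1) ^ (card K + 1) * \<mu> (\<Inter>i\<in>K. A i))"
      by (simp add: \<mu>_def)
  qed
  also have "(\<Sum>K\<in>N. (-1) ^ (card K + 1) * \<mu> (\<Inter>i\<in>K. A i)) = \<mu> (\<Union>i\<in>I. A i)"
    unfolding N_def using Incl_Excl_UN[of \<mu> I A, OF additive assms(2)] by simp
  also have "int (card U) + - \<mu> (\<Union>i\<in>I. A i) = int (card (H_int U (complement_system U A) I))"
    using assms(1) by (simp add: \<mu>_def H_int_complement_system card_Diff_subset_Int card_mono of_nat_diff)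
  finally show ?thesis ..
qed

lemma harmonic_complement_system:
  assumes "finite U" "\<forall>i\<in>{1..m}. A i \<subseteq> U" "harmonic U m A"
  shows "harmonic U m (complement_system U A)"
  unfolding harmonic_def
proof (intro allI impI)
  fix I J
  assume I: "I \<subseteq> {1..m}" and J: "J \<subseteq> {1..m}" and "run_decomp I = run_decomp J"
  moreover have "finite I" "finite J" "0 \<notin> I" "0 \<notin> J"
    using I J finite_subset by auto
  ultimately obtain h where h: "bij_betw h (Pow I) (Pow J)"
    "\<And>K. K \<subseteq> I \<Longrightarrow> run_decomp (h K) = run_decomp K \<and> card (h K) = card K"
    using run_decomp_eq_imp_bij_betw_Pow by blast
  define F where "F K = (-1) ^ card K * int (card (H_int U A K))" for K
  have "F (h K) = F K" if "K \<subseteq> I" for K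
  proof -
    have "h K \<in> Pow J"
      using h(1) that by (auto simp: bij_betw_def)
    then have "h K \<subseteq> {1..m}" "K \<subseteq> {1..m}"
      using that I J by auto
    then have "card (H_int U A (h K)) = card (H_int U A K)"
      using assms(3) h(2)[OF that] unfolding harmonic_def by blast
    then show ?thesis
      using h(2)[OF that] by (simp add: F_def)
  qed
  then have "sum F (Pow I) = sum F (Pow J)"
    using sum.reindex_bij_betw[OF h(1), of F] by simp
  moreover have "int (card (H_int U (complement_system U A) L)) = sum F (Pow L)"
    if "L \<subseteq> {1..m}" for L
    unfolding F_def using card_H_int_complement_system assms(1,2) that finite_subset
    by (metis finite_atLeastAtMost subsetD)
  ultimately show "card (H_int U (complement_system U A) I) = card (H_int U (complement_system U A) J)"
    using I J by (metis of_nat_eq_iff)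
qed

lemma harmonic_cong:
  assumes "\<forall>i\<in>{1..m}. A i = B i"
  shows "harmonic U m A \<longleftrightarrow> harmonic U m B"
proof -
  have "H_int U A K = H_int U B K" if "K \<subseteq> {1..m}" for K
    using assms that by (auto simp: H_int_def)
  then show ?thesis
    unfolding harmonic_def by metis
qed

theorem corollary3p23:
  fixes U :: "'a set" and m :: nat and A :: "nat \<Rightarrow> 'a set"
  assumes "finite U" and "\<forall>i\<in>{1..m}. A i \<subseteq> U"
  shows "harmonic U m A \<longleftrightarrow> harmonic U m (complement_system U A)"
proof
  assume "harmonic U m A"
  then show "harmonic U m (complement_system U A)"
    using harmonic_complement_system assms by blast
next
  assume "harmonic U m (complement_system U A)"
  then have "harmonic U m (complement_system U (complement_system U A))"
    using harmonic_complement_system[OF assms(1)] by (auto simp: complement_system_def)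
  moreover have "\<forall>i\<in>{1..m}. complement_system U (complement_system U A) i = A i"
    using assms(2) by (auto simp: complement_system_def)
  ultimately show "harmonic U m A"
    using harmonic_cong by blast
qed

end
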